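(* Let $n\ge 1$, $m\ge 2$, $0\le k\le n-1$, and let $\overline{\mathcal{C}}^k_{ac}$ be the class of all complete and all incomplete acyclic $k$-bounded CP-nets over $n$ variables with $m$ values each, over the instance space $\overline{\mathcal{X}}_{swap}$. Then: (1) $\mathrm{VCD}(\overline{\mathcal{C}}^{n-1}_{ac})=m^n-1$; (2) $\mathrm{VCD}(\overline{\mathcal{C}}^{0}_{ac})=(m-1)n$; (3) $\mathrm{VCD}(\overline{\mathcal{C}}^{k}_{ac})\ge(m-1)\mathcal{M}_k=(m-1)(n-k)m^k+m^k-1$.
   Context: Variables $V=\{v_1,\dots,v_n\}$, each with a finite domain of size $m$. An outcome assigns a value to every variable; $\mathcal{O}_X$ denotes assignments to $X\subseteq V$. A CP-net specifies for each $v_i$ a parent set $Pa(v_i)\subseteq V\setminus\{v_i\}$ and, for each context $\gamma\in\mathcal{O}_{Pa(v_i)}$, either a strict total order $\succ^{v_i}_\gamma$ on $D_{v_i}$ or nothing (complete if always given, incomplete otherwise); parents are non-dummy. Acyclic: parent graph (edges $(v_j,v_i)$, $v_j\in Pa(v_i)$) acyclic; $k$-bounded: all $|Pa(v_i)|\le k$. Improving flip from $o$ to $o'$ (differing only in $v_i$): $\succ^{v_i}_{o[Pa(v_i)]}$ is given and $o'[v_i]\succ^{v_i}_{o[Pa(v_i)]}o[v_i]$; $o'\succ o$ iff a nonempty sequence of improving flips leads from $o$ to $o'$. $\overline{\mathcal{X}}_{swap}$ is the set of all ordered pairs $x=(x.1,x.2)$ of outcomes differing in exactly one variable; a CP-net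 $N$ is the concept $c_N(x)=1$ iff $x.1\succ x.2$ under $N$. VCD is the largest size of a set on which all labelings are realized by the class. $\mathcal{M}_k=(n-k)m^k+\frac{m^k-1}{m-1}$. *)

theory Defs
  imports Main
begin

definition outcomes :: "nat \<Rightarrow> nat \<Rightarrow> nat list set" where
  "outcomes n m = {xs. length xs = n \<and> (\<forall>x\<in>set xs. x < m)}"

text \<open>A CP-net is a pair (Pa, cpt): Pa i is the parent set of v_i, and
  cpt i u is the (optional) order on the domain of v_i in the context u[Pa i];
  it is indexed by a full outcome but required to depend only on u[Pa i].
  A relation r with r a b means "a is preferred to b".\<close>

type_synonym cpnet = "(nat \<Rightarrow> nat set) \<times> (nat \<Rightarrow> nat list \<Rightarrow> (nat \<Rightarrow> nat \<Rightarrow> bool) option)"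

definition strict_total_on :: "nat \<Rightarrow> (nat \<Rightarrow> nat \<Rightarrow> bool) \<Rightarrow> bool" where
  "strict_total_on m r \<longleftrightarrow>
     (\<forall>a b. r a b \<longrightarrow> a < m \<and> b < m) \<and>
     (\<forall>a. \<not> r a a) \<and>
     (\<forall>a b c. r a b \<longrightarrow> r b c \<longrightarrow> r a c) \<and>
     (\<forall>a<m. \<forall>b<m. a \<noteq> b \<longrightarrow> r a b \<or> r b a)"

definition is_cpnet :: "nat \<Rightarrow> nat \<Rightarrow> cpnet \<Rightarrow> bool" where
  "is_cpnet n m N \<longleftrightarrow>
     (\<forall>i<n. fst N i \<subseteq> {..<n} - {i}) \<and>
     (\<forall>i<n. \<forall>u\<in>outcomes n m. \<forall>r. snd N i u = Some r \<longrightarrow> strict_total_on m r) \<and>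
     (\<forall>i<n. \<forall>u\<in>outcomes n m. \<forall>u'\<in>outcomes n m.
         (\<forall>j\<in>fst N i. u ! j = u' ! j) \<longrightarrow> snd N i u = snd N i u') \<and>
     \<comment> \<open>parents are non-dummy\<close>
     (\<forall>i<n. \<forall>j\<in>fst N i. \<exists>u\<in>outcomes n m. \<exists>u'\<in>outcomes n m.
         (\<forall>l\<in>fst N i - {j}. u ! l = u' ! l) \<and> snd N i u \<noteq> snd N i u')"

definition parent_graph :: "nat \<Rightarrow> cpnet \<Rightarrow> (nat \<times> nat) set" where
  "parent_graph n N = {(j, i). i < n \<and> j \<in> fst N i}"

definition acyclic_cpnet :: "nat \<Rightarrow> cpnet \<Rightarrow> bool" where
  "acyclic_cpnet n N \<longleftrightarrow> acyclic (parent_graph n N)"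

definition k_bounded :: "nat \<Rightarrow> nat \<Rightarrow> cpnet \<Rightarrow> bool" where
  "k_bounded n k N \<longleftrightarrow> (\<forall>i<n. card (fst N i) \<le> k)"

definition improving_flip :: "nat \<Rightarrow> nat \<Rightarrow> cpnet \<Rightarrow> (nat list \<times> nat list) set" where
  "improving_flip n m N = {(u, u'). u \<in> outcomes n m \<and> u' \<in> outcomes n m \<and>
     (\<exists>i<n. (\<forall>j. j \<noteq> i \<longrightarrow> u ! j = u' ! j) \<and>
        (\<exists>r. snd N i u = Some r \<and> r (u' ! i) (u ! i)))}"

definition preferred :: "nat \<Rightarrow> nat \<Rightarrow> cpnet \<Rightarrow> nat list \<Rightarrow> nat list \<Rightarrow> bool" where
  "preferred n m N u' u \<longleftrightarrow> (u, u') \<in> (improving_flip n m N)\<^sup>+"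

definition swap_instances :: "nat \<Rightarrow> nat \<Rightarrow> (nat list \<times> nat list) set" where
  "swap_instances n m = {(x1, x2). x1 \<in> outcomes n m \<and> x2 \<in> outcomes n m \<and>
      card {i. i < n \<and> x1 ! i \<noteq> x2 ! i} = 1}"

definition concept :: "nat \<Rightarrow> nat \<Rightarrow> cpnet \<Rightarrow> (nat list \<times> nat list) set" where
  "concept n m N = {x \<in> swap_instances n m. preferred n m N (fst x) (snd x)}"

definition acyclic_k_class :: "nat \<Rightarrow> nat \<Rightarrow> nat \<Rightarrow> (nat list \<times> nat list) set set" where
  "acyclic_k_class n m k =
     {concept n m N | N. is_cpnet n m N \<and> acyclic_cpnet n N \<and> k_bounded n k N}"

definition shatters :: "'a set set \<Rightarrow> 'a set \<Rightarrow> bool" where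
  "shatters C S \<longleftrightarrow> (\<forall>T\<subseteq>S. \<exists>c\<in>C. c \<inter> S = T)"

definition VCD :: "'a set set \<Rightarrow> 'a set \<Rightarrow> nat" where
  "VCD C X = Max {card S | S. S \<subseteq> X \<and> finite S \<and> shatters C S}"

definition M_k :: "nat \<Rightarrow> nat \<Rightarrow> nat \<Rightarrow> nat" where
  "M_k n m k = (n - k) * m ^ k + (m ^ k - 1) div (m - 1)"

end

theory Submission
  imports Defs "HOL-Library.Transitive_Closure_Table"
begin

text \<open>In an acyclic CP-net a swap \<open>(a, b)\<close> is entailed iff the CPT of the swapped variable,
  read in the context \<open>b\<close>, prefers \<open>a\<close>: along any improving sequence the first changed
  variable in a topological order is improved in a fixed context.

  Upper bounds: view a set \<open>S\<close> of swaps as a multigraph on outcomes. If \<open>S\<close> contains a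
  cycle, label it so that at least one swap of each cycle variable is in the concept and
  all of them point along the same direction of the cycle. A cycle variable without
  parents among the cycle variables has a constant CPT along the cycle, so its values
  would strictly increase around a closed walk. Hence a shattered \<open>S\<close> is a forest,
  \<open>|S| \<le> m\<^sup>n - 1\<close>; for separable nets the same argument on the values of a single
  variable bounds its swaps by \<open>m - 1\<close>.

  Lower bound: the swaps raising \<open>v\<^sub>i\<close> from \<open>0\<close> in contexts that vanish from \<open>v\<^bsub>min i k\<^esub>\<close>
  on are shattered, since a CPT of \<open>v\<^sub>i\<close> with parents \<open>v\<^sub>0, \<dots>, v\<^bsub>min i k - 1\<^esub>\<close> may rank every
  value independently above or below \<open>0\<close> in every such context. There are
  \<open>(m - 1) m\<^bsup>min i k\<^esup>\<close> of them for each \<open>i\<close>.\<close>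

section \<open>Closed walks and forests\<close>

lemma closed_walk_no_strict_step:
  fixes g :: "nat \<Rightarrow> 'a"
  assumes trans: "transp R" and irrefl: "irreflp R" and closed: "g L = g 0"
    and steps: "\<And>t. t < L \<Longrightarrow> g (Suc t) = g t \<or> R (g t) (g (Suc t))"
    and strict: "s < L" "R (g s) (g (Suc s))"
  shows False
proof -
  have walk: "(g 0 = g t \<or> R (g 0) (g t)) \<and> (s < t \<longrightarrow> R (g 0) (g t))" if "t \<le> L" for t
    using that
  proof (induction t)
    case (Suc t)
    then have IH: "(g 0 = g t \<or> R (g 0) (g t)) \<and> (s < t \<longrightarrow> R (g 0) (g t))" by simp
    have "g (Suc t) = g t \<or> R (g t) (g (Suc t))" using steps Suc.prems by simp
    moreover have "t = s \<Longrightarrow> R (g t) (g (Suc t))" using strict by simp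
    ultimately show ?case using IH trans less_Suc_eq by (metis transpD)
  qed simp
  show False using walk[of L] closed strict(1) irrefl by (auto dest: irreflpD)
qed

lemma strict_total_onD:
  assumes "strict_total_on m r"
  shows "transp r" "irreflp r" "a < m \<Longrightarrow> b < m \<Longrightarrow> a \<noteq> b \<Longrightarrow> \<not> r a b \<Longrightarrow> r b a"
  using assms unfolding strict_total_on_def transp_def irreflp_def by blast+

text \<open>Whatever the orientations \<open>fw\<close> of the labelled steps are, the labelling
  forces all \<open>I\<close>-steps of the walk to move in one direction of \<open>r\<close>.\<close>
lemma closed_walk_labelling_unrealizable:
  fixes g :: "nat \<Rightarrow> nat" and I fw :: "nat \<Rightarrow> bool"
  assumes total: "\<And>r. cc = Some r \<Longrightarrow> strict_total_on m r"
    and closed: "g L = g 0"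
    and const: "\<And>t. t < L \<Longrightarrow> \<not> I t \<Longrightarrow> g (Suc t) = g t"
    and change: "\<And>t. t < L \<Longrightarrow> I t \<Longrightarrow> g t \<noteq> g (Suc t) \<and> g t < m \<and> g (Suc t) < m"
    and lab: "\<And>t. t < L \<Longrightarrow> I t \<Longrightarrow>
        (\<exists>r. cc = Some r \<and> (if fw t then r (g (Suc t)) (g t) else r (g t) (g (Suc t))))
          \<longleftrightarrow> (fw t \<longleftrightarrow> (\<exists>s<L. I s \<and> fw s))"
    and s: "s < L" "I s"
  shows False
proof -
  define B where "B \<longleftrightarrow> (\<exists>s<L. I s \<and> fw s)"
  obtain r where r: "cc = Some r"
  proof (cases B)
    case True
    then obtain s' where "s' < L" "I s'" "fw s'" unfolding B_def by blast
    then show ?thesis using lab that B_def True by blast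
  next
    case False
    then have "\<not> fw s" using s unfolding B_def by blast
    then show ?thesis using lab[OF s] that False unfolding B_def by auto
  qed
  have str: "strict_total_on m r" using total r .
  have dir: "if B then r (g (Suc t)) (g t) else r (g t) (g (Suc t))" if t: "t < L" "I t" for t
  proof (cases "fw t")
    case True
    then have B using t unfolding B_def by blast
    then show ?thesis using lab[OF t] r True unfolding B_def[symmetric] by auto
  next
    case False
    then have "B \<longleftrightarrow> \<not> r (g t) (g (Suc t))" using lab[OF t] r unfolding B_def[symmetric] by auto
    then show ?thesis using change[OF t] strict_total_onD(3)[OF str] by (cases B) auto
  qed
  show False
  proof (rule closed_walk_no_strict_step[where R = "\<lambda>x y. if B then r y x else r x y" and s = s])
    show "transp (\<lambda>x y. if B then r y x else r x y)" "irreflp (\<lambda>x y. if B then r y x else r x y)"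
      using strict_total_onD(1,2)[OF str] by (auto simp: transp_def irreflp_def)
    show "g (Suc t) = g t \<or> (if B then r (g (Suc t)) (g t) else r (g t) (g (Suc t)))" if "t < L" for t
      using const[OF that] dir[OF that] by (cases "I t") auto
  qed (use closed dir s in auto)
qed

text \<open>Multigraphs with edge set \<open>E\<close> and endpoint map \<open>ends\<close>; two parallel edges form a cycle.\<close>

definition edge_rel :: "('e \<Rightarrow> 'v \<times> 'v) \<Rightarrow> 'e set \<Rightarrow> ('v \<times> 'v) set" where
  "edge_rel ends F = ends ` F \<union> (ends ` F)\<inverse>"

definition forest :: "('e \<Rightarrow> 'v \<times> 'v) \<Rightarrow> 'e set \<Rightarrow> bool" where
  "forest ends E \<longleftrightarrow> (\<forall>e\<in>E. ends e \<notin> (edge_rel ends (E - {e}))\<^sup>*)"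

definition merge_vertex :: "'v \<Rightarrow> 'v \<Rightarrow> 'v \<Rightarrow> 'v" where
  "merge_vertex a b v = (if v = b then a else v)"

lemma merge_vertex_rtrancl:
  assumes "(a, b) \<in> R" "(b, a) \<in> R"
  shows "(v, merge_vertex a b v) \<in> R\<^sup>*" "(merge_vertex a b v, v) \<in> R\<^sup>*"
  using assms by (auto simp: merge_vertex_def)

lemma edge_rel_map: "edge_rel (map_prod f f \<circ> ends) F = map_prod f f ` edge_rel ends F"
proof -
  have "map_prod f f ` (A\<inverse>) = (map_prod f f ` A)\<inverse>" for A by auto
  then show ?thesis unfolding edge_rel_def by (simp add: image_Un image_comp)
qed

lemma edge_rel_merge_subset:
  assumes "ends e = (a, b)"
  shows "edge_rel (map_prod (merge_vertex a b) (merge_vertex a b) \<circ> ends) F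
    \<subseteq> (edge_rel ends (insert e F))\<^sup>*"
proof
  fix p assume "p \<in> edge_rel (map_prod (merge_vertex a b) (merge_vertex a b) \<circ> ends) F"
  then obtain x y where p: "p = (merge_vertex a b x, merge_vertex a b y)"
    and xy: "(x, y) \<in> edge_rel ends F"
    unfolding edge_rel_map by auto
  let ?R = "edge_rel ends (insert e F)"
  have "(a, b) \<in> ?R" "(b, a) \<in> ?R" using assms unfolding edge_rel_def by force+
  moreover have "(x, y) \<in> ?R" using xy unfolding edge_rel_def by auto
  ultimately show "p \<in> ?R\<^sup>*" unfolding p by (meson merge_vertex_rtrancl r_into_rtrancl rtrancl_trans)
qed

lemma forest_merge:
  assumes forest: "forest ends E" and e: "e \<in> E" "ends e = (a, b)"
  shows "forest (map_prod (merge_vertex a b) (merge_vertex a b) \<circ> ends) (E - {e})"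
  unfolding forest_def
proof
  let ?ends = "map_prod (merge_vertex a b) (merge_vertex a b) \<circ> ends"
  fix e' assume e': "e' \<in> E - {e}"
  let ?R = "edge_rel ends (E - {e'})"
  have "insert e (E - {e} - {e'}) = E - {e'}" using e e' by auto
  then have "(edge_rel ?ends (E - {e} - {e'}))\<^sup>* \<subseteq> ?R\<^sup>*"
    using edge_rel_merge_subset[where ends = ends, OF e(2), of "E - {e} - {e'}"] rtrancl_subset_rtrancl by metis
  moreover obtain x y where xy: "ends e' = (x, y)" by fastforce
  moreover have "(x, merge_vertex a b x) \<in> ?R\<^sup>*" "(merge_vertex a b y, y) \<in> ?R\<^sup>*"
  proof -
    have "(a, b) \<in> ?R" "(b, a) \<in> ?R" using e e' unfolding edge_rel_def by force+
    then show "(x, merge_vertex a b x) \<in> ?R\<^sup>*" "(merge_vertex a b y, y) \<in> ?R\<^sup>*"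
      by (rule merge_vertex_rtrancl)+
  qed
  moreover have "(x, y) \<notin> ?R\<^sup>*" using forest e' xy unfolding forest_def by auto
  ultimately show "?ends e' \<notin> (edge_rel ?ends (E - {e} - {e'}))\<^sup>*"
    by (metis (no_types, lifting) comp_apply map_prod_simp rtrancl_trans subsetD)
qed

lemma card_forest_le:
  assumes "finite V" "V \<noteq> {}" "finite E" "\<And>e. e \<in> E \<Longrightarrow> fst (ends e) \<in> V \<and> snd (ends e) \<in> V"
    "forest ends E"
  shows "card E \<le> card V - 1"
  using assms
proof (induction "card V" arbitrary: V E ends rule: less_induct)
  case less
  show ?case
  proof (cases "E = {}")
    case False
    then obtain e where e: "e \<in> E" by blast
    obtain a b where ab: "ends e = (a, b)" by fastforce
    have "a \<noteq> b" using less.prems(5) e ab unfolding forest_def by auto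
    moreover have ab_V: "a \<in> V" "b \<in> V" using less.prems(4)[OF e] ab by auto
    ultimately have card_V: "card (V - {b}) = card V - 1" "2 \<le> card V"
      using less.prems(1) card_mono[of V "{a, b}"] by auto
    have "card (E - {e}) \<le> card (V - {b}) - 1"
    proof (rule less.hyps)
      show "card (V - {b}) < card V" using card_V by simp
      show "V - {b} \<noteq> {}" using ab_V \<open>a \<noteq> b\<close> by auto
      show "forest (map_prod (merge_vertex a b) (merge_vertex a b) \<circ> ends) (E - {e})"
        using forest_merge[OF less.prems(5) e ab] .
      show "fst ((map_prod (merge_vertex a b) (merge_vertex a b) \<circ> ends) e') \<in> V - {b} \<and>
            snd ((map_prod (merge_vertex a b) (merge_vertex a b) \<circ> ends) e') \<in> V - {b}"
        if "e' \<in> E - {e}" for e'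
        using less.prems(4)[of e'] that ab_V \<open>a \<noteq> b\<close>
        by (cases "ends e'") (auto simp: merge_vertex_def)
    qed (use less.prems in auto)
    moreover have "card (E - {e}) = card E - 1" "card E > 0"
      using e less.prems(3) by (auto simp: card_gt_0_iff)
    ultimately show ?thesis using card_V by linarith
  qed simp
qed

lemma rtrancl_path_nth:
  "rtrancl_path r x xs y \<Longrightarrow> (\<forall>t<length xs. r ((x # xs) ! t) ((x # xs) ! Suc t)) \<and> (x # xs) ! length xs = y"
proof (induction rule: rtrancl_path.induct)
  case (step x y ys z)
  then show ?case by (auto simp: less_Suc_eq_0_disj)
qed simp

lemma rtrancl_obtains_simple_path:
  assumes "(a, b) \<in> R\<^sup>*"
  obtains w K where "w 0 = a" "w K = b" "\<And>t. t < K \<Longrightarrow> (w t, w (Suc t)) \<in> R" "inj_on w {..K}"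
proof -
  have "(\<lambda>x y. (x, y) \<in> R)\<^sup>*\<^sup>* a b" using assms by (simp add: rtranclp_rtrancl_eq)
  then obtain xs where "rtrancl_path (\<lambda>x y. (x, y) \<in> R) a xs b"
    using rtranclp_eq_rtrancl_path by metis
  then obtain ys where P: "rtrancl_path (\<lambda>x y. (x, y) \<in> R) a ys b" and D: "distinct (a # ys)"
    by (rule rtrancl_path_distinct)
  have inj: "inj_on (\<lambda>t. (a # ys) ! t) {..length ys}"
    using D by (auto intro!: inj_onI simp: nth_eq_iff_index_eq simp del: distinct.simps)
  show ?thesis by (rule that[of "\<lambda>t. (a # ys) ! t" "length ys"]) (use inj rtrancl_path_nth[OF P] in auto)
qed

lemma inj_on_consecutive_pairs:
  assumes inj: "inj_on w {..K}" and st: "s < K" "t < K" and eq: "{w s, w (Suc s)} = {w t, w (Suc t)}"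
  shows "s = t"
proof -
  have "w s \<in> {w t, w (Suc t)}" "w (Suc s) \<in> {w t, w (Suc t)}" using eq by blast+
  then have "s = t \<or> s = Suc t" "Suc s = t \<or> s = t"
    using st inj_onD[OF inj, of s t] inj_onD[OF inj, of s "Suc t"] inj_onD[OF inj, of "Suc s" t]
      inj_onD[OF inj, of "Suc s" "Suc t"] by auto
  then show ?thesis by linarith
qed

lemma not_forest_obtains_cycle:
  assumes "\<not> forest ends E"
  obtains L w inst where "0 < L" "w L = w 0" "inj_on inst {..<L}"
    "\<And>t. t < L \<Longrightarrow> inst t \<in> E \<and> (ends (inst t) = (w t, w (Suc t)) \<or> ends (inst t) = (w (Suc t), w t))"
proof -
  obtain e a b where e: "e \<in> E" "ends e = (a, b)" and ab: "(a, b) \<in> (edge_rel ends (E - {e}))\<^sup>*"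
    using assms unfolding forest_def by (metis surj_pair)
  from ab obtain v K where v: "v 0 = a" "v K = b"
    and step: "\<And>t. t < K \<Longrightarrow> (v t, v (Suc t)) \<in> edge_rel ends (E - {e})" and inj: "inj_on v {..K}"
    by (rule rtrancl_obtains_simple_path) blast
  define w where "w t = (if t \<le> K then v t else a)" for t
  define inst where "inst t = (if t < K then (SOME e'. e' \<in> E - {e} \<and>
      (ends e' = (w t, w (Suc t)) \<or> ends e' = (w (Suc t), w t))) else e)" for t
  have inst: "inst t \<in> E \<and> (ends (inst t) = (w t, w (Suc t)) \<or> ends (inst t) = (w (Suc t), w t))
      \<and> (t < K \<longrightarrow> inst t \<noteq> e)" if "t < Suc K" for t
  proof (cases "t < K")
    case True
    then have "\<exists>e'. e' \<in> E - {e} \<and> (ends e' = (w t, w (Suc t)) \<or> ends e' = (w (Suc t), w t))"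
      using step unfolding edge_rel_def w_def by force
    from someI_ex[OF this] show ?thesis using True unfolding inst_def by simp
  next
    case False
    then have "t = K" using that by simp
    then show ?thesis using e v by (simp add: inst_def w_def)
  qed
  have "inj_on inst {..<Suc K}"
  proof (rule inj_onI)
    fix s t assume s: "s \<in> {..<Suc K}" and t: "t \<in> {..<Suc K}" and eq: "inst s = inst t"
    show "s = t"
    proof (cases "s = K \<or> t = K")
      case True
      have at_K: "u = K" if "u \<in> {..<Suc K}" "inst u = e" for u
        using inst[of u] that by (cases "u < K") auto
      have "inst K = e" by (simp add: inst_def)
      then have "inst s = e" "inst t = e" using True eq by auto
      then show ?thesis using at_K s t by metis
    next
      case False
      then have st: "s < K" "t < K" using s t by auto
      have "{w s, w (Suc s)} = {w t, w (Suc t)}"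
        using inst[of s] inst[of t] st eq by (auto simp del: insert_commute)
      then show ?thesis using inj_on_consecutive_pairs[OF inj st] st unfolding w_def by simp
    qed
  qed
  moreover have "w (Suc K) = w 0" unfolding w_def using v(1) by simp
  ultimately show ?thesis using that[of "Suc K" w inst] inst by auto
qed

section \<open>Swaps and the concept of an acyclic CP-net\<close>

lemma nth_eq_beyond_length: "length a = length b \<Longrightarrow> length a \<le> j \<Longrightarrow> a ! j = b ! j"
proof (induction a arbitrary: b j)
  case (Cons x xs)
  then obtain y ys j' where "b = y # ys" "j = Suc j'" by (cases b; cases j) auto
  then show ?case using Cons by simp
qed simp

lemma outcome_nth: "u \<in> outcomes n m \<Longrightarrow> i < n \<Longrightarrow> u ! i < m"
  unfolding outcomes_def by auto

lemma outcomes_eq: "outcomes n m = {xs. set xs \<subseteq> {..<m} \<and> length xs = n}"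
  unfolding outcomes_def by auto

lemma finite_outcomes: "finite (outcomes n m)"
  unfolding outcomes_eq by (rule finite_lists_length_eq) simp

lemma card_outcomes: "card (outcomes n m) = m ^ n"
  unfolding outcomes_eq by (simp add: card_lists_length_eq)

lemma list_update_in_outcomes: "u \<in> outcomes n m \<Longrightarrow> a < m \<Longrightarrow> u[i := a] \<in> outcomes n m"
  unfolding outcomes_def by (auto dest!: subsetD[OF set_update_subset_insert])

lemma finite_swap_instances: "finite (swap_instances n m)"
proof -
  have "swap_instances n m \<subseteq> outcomes n m \<times> outcomes n m" unfolding swap_instances_def by auto
  then show ?thesis using finite_outcomes by (meson finite_SigmaI finite_subset)
qed

definition swap_var :: "nat \<Rightarrow> nat list \<Rightarrow> nat list \<Rightarrow> nat" where
  "swap_var n a b = (THE i. i < n \<and> a ! i \<noteq> b ! i)"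

lemma swap_instancesD:
  assumes "(a, b) \<in> swap_instances n m"
  shows "a \<in> outcomes n m" "b \<in> outcomes n m" "swap_var n a b < n"
    "a ! swap_var n a b \<noteq> b ! swap_var n a b" "\<And>j. j \<noteq> swap_var n a b \<Longrightarrow> a ! j = b ! j"
proof -
  have ab: "a \<in> outcomes n m" "b \<in> outcomes n m"
    and card: "card {i. i < n \<and> a ! i \<noteq> b ! i} = 1"
    using assms unfolding swap_instances_def by auto
  from card obtain i where i: "{i. i < n \<and> a ! i \<noteq> b ! i} = {i}" by (rule card_1_singletonE)
  then have var: "swap_var n a b = i" unfolding swap_var_def by (intro the_equality) blast+
  show "a \<in> outcomes n m" "b \<in> outcomes n m" using ab by simp_all
  show "swap_var n a b < n" "a ! swap_var n a b \<noteq> b ! swap_var n a b" using i var by blast+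
  fix j assume "j \<noteq> swap_var n a b"
  then show "a ! j = b ! j"
    using i ab nth_eq_beyond_length[of a b j] var
    unfolding outcomes_def by (cases "j < n") auto
qed

lemma swap_instances_sym: "(a, b) \<in> swap_instances n m \<Longrightarrow> (b, a) \<in> swap_instances n m"
  unfolding swap_instances_def by (simp add: eq_commute)

lemma swap_var_sym: "swap_var n a b = swap_var n b a"
  unfolding swap_var_def by (simp add: eq_commute)

lemma swap_var_eqI: "(a, b) \<in> swap_instances n m \<Longrightarrow> a ! i \<noteq> b ! i \<Longrightarrow> i = swap_var n a b"
  using swap_instancesD(5) by blast

lemma parent_graph_subset: "is_cpnet n m N \<Longrightarrow> parent_graph n N \<subseteq> {..<n} \<times> {..<n}"
  unfolding is_cpnet_def parent_graph_def by auto

lemma wf_parent_graph: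
  assumes "is_cpnet n m N" "acyclic_cpnet n N"
  shows "wf (parent_graph n N)"
proof -
  have "finite (parent_graph n N)" using parent_graph_subset[OF assms(1)] by (rule finite_subset) simp
  then show ?thesis using assms(2) unfolding acyclic_cpnet_def by (rule finite_acyclic_wf)
qed

lemma acyclic_cpnet_rank:
  assumes N: "is_cpnet n m N" and ac: "acyclic_cpnet n N"
  obtains \<rho> :: "nat \<Rightarrow> nat" where "inj_on \<rho> {..<n}" "\<And>i j. i < n \<Longrightarrow> j \<in> fst N i \<Longrightarrow> \<rho> j < \<rho> i"
proof
  let ?P = "parent_graph n N"
  define A where "A j = {l. (l, j) \<in> ?P\<^sup>+}" for j
  show "inj_on (\<lambda>j. card (A j) * n + j) {..<n}"
    by (rule inj_onI) (metis lessThan_iff mod_less mod_mult_self3)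
  fix i j assume i: "i < n" and j: "j \<in> fst N i"
  have "?P\<^sup>+ \<subseteq> {..<n} \<times> {..<n}" using parent_graph_subset[OF N] by (rule trancl_subset_Sigma)
  then have "finite (A i)" unfolding A_def by (auto intro: finite_subset[of _ "{..<n}"])
  have ji: "(j, i) \<in> ?P" using i j by (simp add: parent_graph_def)
  then have "A j \<subseteq> A i" "j \<in> A i" unfolding A_def by (auto intro: trancl_into_trancl)
  moreover have "j \<notin> A j" using ac unfolding A_def acyclic_cpnet_def acyclic_def by auto
  ultimately have "card (A j) < card (A i)" using \<open>finite (A i)\<close> by (metis psubsetI psubset_card_mono)
  moreover have "j < n" using N i j unfolding is_cpnet_def by auto
  ultimately have "card (A j) * n + j < (card (A j) + 1) * n" by simp
  also have "\<dots> \<le> card (A i) * n + i"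
    using \<open>card (A j) < card (A i)\<close> by (metis Suc_eq_plus1 Suc_leI mult_le_mono1 trans_le_add1)
  finally show "card (A j) * n + j < card (A i) * n + i" .
qed

text \<open>Invariant of improving sequences in an acyclic CP-net, for a topological ranking \<open>\<rho>\<close>
  of the variables.\<close>
definition first_change_improves ::
    "nat \<Rightarrow> nat \<Rightarrow> cpnet \<Rightarrow> (nat \<Rightarrow> nat) \<Rightarrow> nat list \<Rightarrow> nat list \<Rightarrow> bool" where
  "first_change_improves n m N \<rho> u u' \<longleftrightarrow> u \<in> outcomes n m \<and> u' \<in> outcomes n m \<and>
     (\<exists>j<n. u ! j \<noteq> u' ! j \<and> (\<forall>l<n. \<rho> l < \<rho> j \<longrightarrow> u ! l = u' ! l) \<and>
        (\<exists>r. snd N j u = Some r \<and> r (u' ! j) (u ! j)))"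

lemma first_change_improvesI:
  "u \<in> outcomes n m \<Longrightarrow> u' \<in> outcomes n m \<Longrightarrow> j < n \<Longrightarrow> u ! j \<noteq> u' ! j \<Longrightarrow>
   (\<forall>l<n. \<rho> l < \<rho> j \<longrightarrow> u ! l = u' ! l) \<Longrightarrow> snd N j u = Some r \<Longrightarrow> r (u' ! j) (u ! j) \<Longrightarrow>
   first_change_improves n m N \<rho> u u'"
  unfolding first_change_improves_def by blast

lemma cpnet_strict_total:
  "is_cpnet n m N \<Longrightarrow> i < n \<Longrightarrow> u \<in> outcomes n m \<Longrightarrow> snd N i u = Some r \<Longrightarrow> strict_total_on m r"
  unfolding is_cpnet_def by blast

lemma cpnet_cpt_cong:
  "is_cpnet n m N \<Longrightarrow> i < n \<Longrightarrow> u \<in> outcomes n m \<Longrightarrow> u' \<in> outcomes n m \<Longrightarrow>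
   (\<And>j. j \<in> fst N i \<Longrightarrow> u ! j = u' ! j) \<Longrightarrow> snd N i u = snd N i u'"
  unfolding is_cpnet_def by blast

lemma cpt_eq_if_lower_agree:
  assumes N: "is_cpnet n m N" and \<rho>_parent: "\<And>i j. i < n \<Longrightarrow> j \<in> fst N i \<Longrightarrow> \<rho> j < \<rho> i"
    and i: "i < n" and u: "u \<in> outcomes n m" "u' \<in> outcomes n m"
    and agree: "\<forall>l<n. \<rho> l < \<rho> i \<longrightarrow> u ! l = u' ! l"
  shows "snd N i u = snd N i u'"
proof (rule cpnet_cpt_cong[OF N i u])
  fix j assume "j \<in> fst N i"
  moreover have "j < n" using N i calculation unfolding is_cpnet_def by blast
  ultimately show "u ! j = u' ! j" using agree \<rho>_parent[OF i] by blast
qed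

lemma first_change_improves_flip:
  assumes N: "is_cpnet n m N" and flip: "(u, u') \<in> improving_flip n m N"
  shows "first_change_improves n m N \<rho> u u'"
proof -
  from flip obtain i r where u: "u \<in> outcomes n m" "u' \<in> outcomes n m" and i: "i < n"
    and eq: "\<forall>j. j \<noteq> i \<longrightarrow> u ! j = u' ! j" and r: "snd N i u = Some r" "r (u' ! i) (u ! i)"
    unfolding improving_flip_def by blast
  have "u ! i \<noteq> u' ! i"
    using r strict_total_onD(2)[OF cpnet_strict_total[OF N i u(1) r(1)]] by (auto dest: irreflpD)
  moreover have "\<forall>l<n. \<rho> l < \<rho> i \<longrightarrow> u ! l = u' ! l" using eq by auto
  ultimately show ?thesis using first_change_improvesI[OF u i _ _ r] by blast
qed

lemma first_change_improves_trans:
  assumes N: "is_cpnet n m N"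
    and \<rho>_inj: "inj_on \<rho> {..<n}" and \<rho>_parent: "\<And>i j. i < n \<Longrightarrow> j \<in> fst N i \<Longrightarrow> \<rho> j < \<rho> i"
    and 1: "first_change_improves n m N \<rho> u u'" and 2: "first_change_improves n m N \<rho> u' u''"
  shows "first_change_improves n m N \<rho> u u''"
proof -
  from 1 obtain j1 r1 where u: "u \<in> outcomes n m" "u' \<in> outcomes n m" and j1: "j1 < n" "u ! j1 \<noteq> u' ! j1"
    and below1: "\<forall>l<n. \<rho> l < \<rho> j1 \<longrightarrow> u ! l = u' ! l"
    and r1: "snd N j1 u = Some r1" "r1 (u' ! j1) (u ! j1)" unfolding first_change_improves_def by blast
  from 2 obtain j2 r2 where u'': "u'' \<in> outcomes n m" and j2: "j2 < n" "u' ! j2 \<noteq> u'' ! j2"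
    and below2: "\<forall>l<n. \<rho> l < \<rho> j2 \<longrightarrow> u' ! l = u'' ! l"
    and r2: "snd N j2 u' = Some r2" "r2 (u'' ! j2) (u' ! j2)" unfolding first_change_improves_def by blast
  consider "\<rho> j1 < \<rho> j2" | "\<rho> j2 < \<rho> j1" | "j1 = j2"
    using inj_onD[OF \<rho>_inj, of j1 j2] j1 j2 by fastforce
  then show ?thesis
  proof cases
    case 1
    have "u ! j1 \<noteq> u'' ! j1" "r1 (u'' ! j1) (u ! j1)" using below2 j1 1 r1(2) by auto
    moreover have "\<forall>l<n. \<rho> l < \<rho> j1 \<longrightarrow> u ! l = u'' ! l" using below1 below2 1 by auto
    ultimately show ?thesis using first_change_improvesI[OF u(1) u'' j1(1) _ _ r1(1)] by blast
  next
    case 2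
    have "snd N j2 u = snd N j2 u'"
      using cpt_eq_if_lower_agree[OF N \<rho>_parent j2(1) u] below1 2 by auto
    then have "snd N j2 u = Some r2" using r2(1) by simp
    moreover have "u ! j2 \<noteq> u'' ! j2" "r2 (u'' ! j2) (u ! j2)" using below1 j2 2 r2(2) by auto
    moreover have "\<forall>l<n. \<rho> l < \<rho> j2 \<longrightarrow> u ! l = u'' ! l" using below1 below2 2 by auto
    ultimately show ?thesis using first_change_improvesI[OF u(1) u'' j2(1)] by blast
  next
    case 3
    have "snd N j1 u = snd N j1 u'" using cpt_eq_if_lower_agree[OF N \<rho>_parent j1(1) u below1] .
    then have "r1 = r2" using r1 r2 3 by simp
    have str: "strict_total_on m r1" using cpnet_strict_total[OF N j1(1) u(1) r1(1)] .
    then have "r1 (u'' ! j1) (u ! j1)"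
      using r1 r2 \<open>r1 = r2\<close> 3 strict_total_onD(1) by (metis transpD)
    moreover have "u ! j1 \<noteq> u'' ! j1" using calculation strict_total_onD(2)[OF str] by (auto dest: irreflpD)
    moreover have "\<forall>l<n. \<rho> l < \<rho> j1 \<longrightarrow> u ! l = u'' ! l" using below1 below2 3 by auto
    ultimately show ?thesis using first_change_improvesI[OF u(1) u'' j1(1) _ _ r1(1)] by blast
  qed
qed

lemma preferred_first_change_improves:
  assumes N: "is_cpnet n m N" and ac: "acyclic_cpnet n N" and pref: "preferred n m N u' u"
  obtains \<rho> where "first_change_improves n m N \<rho> u u'"
proof -
  obtain \<rho> :: "nat \<Rightarrow> nat" where \<rho>: "inj_on \<rho> {..<n}" "\<And>i j. i < n \<Longrightarrow> j \<in> fst N i \<Longrightarrow> \<rho> j < \<rho> i"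
    using acyclic_cpnet_rank[OF N ac] by blast
  have "(u, u') \<in> (improving_flip n m N)\<^sup>+" using pref unfolding preferred_def .
  then have "first_change_improves n m N \<rho> u u'"
  proof (induction rule: trancl_induct)
    case (base u')
    then show ?case by (rule first_change_improves_flip[OF N])
  next
    case (step u' u'')
    show ?case
      by (rule first_change_improves_trans[OF N \<rho> step.IH first_change_improves_flip[OF N step.hyps(2)]])
  qed
  then show ?thesis by (rule that)
qed

lemma concept_swap_iff:
  assumes N: "is_cpnet n m N" and ac: "acyclic_cpnet n N" and ab: "(a, b) \<in> swap_instances n m"
  shows "(a, b) \<in> concept n m N \<longleftrightarrow>
    (\<exists>r. snd N (swap_var n a b) b = Some r \<and> r (a ! swap_var n a b) (b ! swap_var n a b))"
proof
  assume "(a, b) \<in> concept n m N"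
  then obtain \<rho> where "first_change_improves n m N \<rho> b a"
    using preferred_first_change_improves[OF N ac] unfolding concept_def by auto
  then obtain j r where "b ! j \<noteq> a ! j" "snd N j b = Some r" "r (a ! j) (b ! j)"
    unfolding first_change_improves_def by blast
  moreover have "j = swap_var n a b" using swap_var_eqI[OF ab] calculation(1) by metis
  ultimately show "\<exists>r. snd N (swap_var n a b) b = Some r \<and> r (a ! swap_var n a b) (b ! swap_var n a b)"
    by blast
next
  assume "\<exists>r. snd N (swap_var n a b) b = Some r \<and> r (a ! swap_var n a b) (b ! swap_var n a b)"
  moreover have "\<forall>j. j \<noteq> swap_var n a b \<longrightarrow> b ! j = a ! j" using swap_instancesD(5)[OF ab] by metis
  ultimately have "(b, a) \<in> improving_flip n m N"
    unfolding improving_flip_def using swap_instancesD(1-3)[OF ab] by blast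
  then show "(a, b) \<in> concept n m N" unfolding concept_def preferred_def using ab by auto
qed

section \<open>Upper bounds\<close>

lemma shatters_realizes_labelling:
  assumes sh: "shatters C S" and inj: "inj_on inst {..<L}" and S: "\<And>t. t < L \<Longrightarrow> inst t \<in> S"
  shows "\<exists>c\<in>C. \<forall>t<L. inst t \<in> c \<longleftrightarrow> P t"
proof -
  define T where "T = {inst t | t. t < L \<and> P t}"
  have "T \<subseteq> S" using S unfolding T_def by blast
  then obtain c where c: "c \<in> C" "c \<inter> S = T" using sh unfolding shatters_def by blast
  have "inst t \<in> c \<longleftrightarrow> P t" if t: "t < L" for t
  proof -
    have "inst t \<in> c \<longleftrightarrow> inst t \<in> T" using c(2) S[OF t] by blast
    also have "\<dots> \<longleftrightarrow> P t" using inj t unfolding T_def by (auto dest: inj_onD)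
    finally show ?thesis .
  qed
  then show ?thesis using c(1) by blast
qed

text \<open>The walk \<open>g\<close> follows the value of \<open>v\<^sub>i\<close> along a cycle
  whose \<open>I\<close>-steps are swaps of \<open>v\<^sub>i\<close> read in the context where its CPT is \<open>cc\<close>; the
  labelling puts at least one of them into the concept and makes them all improve in the
  same direction.\<close>
lemma cycle_labelling_unrealizable:
  assumes N: "is_cpnet n m N" "acyclic_cpnet n N" and i: "i < n"
    and closed: "g L = g 0"
    and const: "\<And>t. t < L \<Longrightarrow> \<not> I t \<Longrightarrow> g (Suc t) = g t"
    and edge: "\<And>t. t < L \<Longrightarrow> I t \<Longrightarrow> inst t \<in> swap_instances n m \<and>
        swap_var n (fst (inst t)) (snd (inst t)) = i \<and> snd N i (snd (inst t)) = cc \<and>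
        (fst (inst t) ! i, snd (inst t) ! i) = (if fw t then (g (Suc t), g t) else (g t, g (Suc t)))"
    and lab: "\<And>t. t < L \<Longrightarrow> I t \<Longrightarrow> inst t \<in> concept n m N \<longleftrightarrow> (fw t \<longleftrightarrow> (\<exists>s<L. I s \<and> fw s))"
    and s: "s < L" "I s"
  shows False
proof (rule closed_walk_labelling_unrealizable[where cc = cc and g = g and I = I and fw = fw and m = m])
  show "g L = g 0" "s < L" "I s" using closed s by simp_all
  show "\<And>t. t < L \<Longrightarrow> \<not> I t \<Longrightarrow> g (Suc t) = g t" by (rule const)
next
  fix r assume "cc = Some r"
  then show "strict_total_on m r"
    using edge[OF s] cpnet_strict_total[OF N(1) i] swap_instancesD(2)[of "fst (inst s)" "snd (inst s)"]
    by auto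
next
  fix t assume t: "t < L" "I t"
  obtain a b where ab: "inst t = (a, b)" by fastforce
  have sw: "(a, b) \<in> swap_instances n m" and var: "swap_var n a b = i"
    and cpt: "snd N i b = cc" and ends: "(a ! i, b ! i) = (if fw t then (g (Suc t), g t) else (g t, g (Suc t)))"
    using edge[OF t] ab by auto
  have "a ! i \<noteq> b ! i" "a ! i < m" "b ! i < m"
    using swap_instancesD[OF sw] var i outcome_nth by auto
  then show "g t \<noteq> g (Suc t) \<and> g t < m \<and> g (Suc t) < m" using ends by (auto split: if_splits)
  have "inst t \<in> concept n m N \<longleftrightarrow> (\<exists>r. cc = Some r \<and> r (a ! i) (b ! i))"
    using concept_swap_iff[OF N sw] var cpt ab by simp
  then show "(\<exists>r. cc = Some r \<and> (if fw t then r (g (Suc t)) (g t) else r (g t) (g (Suc t))))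
      \<longleftrightarrow> (fw t \<longleftrightarrow> (\<exists>s<L. I s \<and> fw s))"
    using lab[OF t] ends by (auto split: if_splits)
qed

text \<open>A swapped variable of the walk without parents among the swapped variables.\<close>
lemma swap_walk_constant_cpt:
  assumes N: "is_cpnet n m N" "acyclic_cpnet n N" and L: "0 < L"
    and sw: "\<And>t. t < L \<Longrightarrow> (w t, w (Suc t)) \<in> swap_instances n m"
  obtains s where "s < L" "\<And>t. t \<le> L \<Longrightarrow>
    snd N (swap_var n (w s) (w (Suc s))) (w t) = snd N (swap_var n (w s) (w (Suc s))) (w 0)"
proof -
  define vt where "vt t = swap_var n (w t) (w (Suc t))" for t
  define C where "C = vt ` {..<L}"
  have w_out: "w t \<in> outcomes n m" if "t \<le> L" for t
  proof (cases "t < L")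
    case False
    then have "t = Suc (L - 1)" using that L by simp
    then show ?thesis using swap_instancesD(2)[OF sw[of "L - 1"]] L by simp
  qed (use swap_instancesD(1)[OF sw] in simp)
  have C: "C \<subseteq> {..<n}" unfolding C_def vt_def using swap_instancesD(3)[OF sw] by auto
  have agree: "\<forall>l. l \<notin> C \<longrightarrow> w t ! l = w 0 ! l" if "t \<le> L" for t
    using that
  proof (induction t)
    case (Suc t)
    then have t: "t < L" by simp
    then have "vt t \<in> C" unfolding C_def by simp
    then show ?case
      using Suc.IH[OF Suc_leD[OF Suc.prems]] swap_instancesD(5)[OF sw[OF t]] unfolding vt_def by metis
  qed simp
  have "vt 0 \<in> C" using L unfolding C_def by simp
  then obtain i where iC: "i \<in> C" and no_parent: "\<And>j. (j, i) \<in> parent_graph n N \<Longrightarrow> j \<notin> C"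
    using wf_parent_graph[OF N] by (metis wfE_min)
  have i: "i < n" using iC C by auto
  have disj: "fst N i \<inter> C = {}" using no_parent i unfolding parent_graph_def by blast
  have "snd N i (w t) = snd N i (w 0)" if "t \<le> L" for t
    by (rule cpnet_cpt_cong[OF N(1) i w_out[OF that] w_out[of 0]]) (use agree[OF that] disj in auto)
  moreover obtain s where "s < L" "vt s = i" using iC unfolding C_def by blast
  ultimately show ?thesis using that unfolding vt_def by blast
qed

lemma shattered_swaps_forest:
  assumes S: "S \<subseteq> swap_instances n m" and sh: "shatters (acyclic_k_class n m k) S"
  shows "forest id S"
proof (rule ccontr)
  assume "\<not> forest id S"
  then obtain L w inst where L: "0 < L" "w L = w 0" and inj: "inj_on inst {..<L}"
    and cyc: "\<And>t. t < L \<Longrightarrow> inst t \<in> S \<and> (inst t = (w t, w (Suc t)) \<or> inst t = (w (Suc t), w t))"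
    by (rule not_forest_obtains_cycle) auto
  define fw where "fw t \<longleftrightarrow> inst t = (w (Suc t), w t)" for t
  define vt where "vt t = swap_var n (w t) (w (Suc t))" for t
  have "\<exists>c\<in>acyclic_k_class n m k. \<forall>t<L. inst t \<in> c \<longleftrightarrow> (fw t \<longleftrightarrow> (\<exists>s<L. vt s = vt t \<and> fw s))"
    using cyc by (intro shatters_realizes_labelling[OF sh inj]) blast
  then obtain N where N: "is_cpnet n m N" "acyclic_cpnet n N"
    and lab: "\<forall>t<L. inst t \<in> concept n m N \<longleftrightarrow> (fw t \<longleftrightarrow> (\<exists>s<L. vt s = vt t \<and> fw s))"
    unfolding acyclic_k_class_def by blast
  have sw: "(w t, w (Suc t)) \<in> swap_instances n m" if "t < L" for t
    using cyc[OF that] S swap_instances_sym by (metis subsetD)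
  obtain s where s: "s < L" and cpt: "\<And>t. t \<le> L \<Longrightarrow> snd N (vt s) (w t) = snd N (vt s) (w 0)"
    using swap_walk_constant_cpt[where w = w, OF N L(1) sw] unfolding vt_def by blast
  have inst_eq: "inst t = (if fw t then (w (Suc t), w t) else (w t, w (Suc t)))" if "t < L" for t
    using cyc[OF that] unfolding fw_def by auto
  show False
  proof (rule cycle_labelling_unrealizable[OF N, where i = "vt s" and g = "\<lambda>t. w t ! vt s"
        and I = "\<lambda>t. vt t = vt s" and inst = inst and fw = fw and cc = "snd N (vt s) (w 0)", OF _ _ _ _ _ s])
    show "vt s < n" using swap_instancesD(3)[OF sw[OF s]] unfolding vt_def .
    show "w L ! vt s = w 0 ! vt s" using L by simp
    fix t assume t: "t < L"
    show "vt t \<noteq> vt s \<Longrightarrow> w (Suc t) ! vt s = w t ! vt s"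
      using swap_instancesD(5)[OF sw[OF t]] unfolding vt_def by metis
    assume vt: "vt t = vt s"
    show "inst t \<in> concept n m N \<longleftrightarrow> (fw t \<longleftrightarrow> (\<exists>s'<L. vt s' = vt s \<and> fw s'))"
      using lab t vt by simp
    show "inst t \<in> swap_instances n m \<and> swap_var n (fst (inst t)) (snd (inst t)) = vt s \<and>
        snd N (vt s) (snd (inst t)) = snd N (vt s) (w 0) \<and>
        (fst (inst t) ! vt s, snd (inst t) ! vt s)
          = (if fw t then (w (Suc t) ! vt s, w t ! vt s) else (w t ! vt s, w (Suc t) ! vt s))"
      using inst_eq[OF t] sw[OF t] swap_instances_sym cpt[of t] cpt[of "Suc t"] t vt swap_var_sym[of n "w t"]
      unfolding vt_def by auto
  qed simp
qed

lemma shattered_card_le: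
  assumes "S \<subseteq> swap_instances n m" "shatters (acyclic_k_class n m k) S" "0 < m"
  shows "card S \<le> m ^ n - 1"
proof -
  have "outcomes n m \<noteq> {}" using \<open>0 < m\<close> unfolding outcomes_def by (auto intro!: exI[of _ "replicate n 0"])
  moreover have "finite S" using assms(1) finite_swap_instances finite_subset by blast
  ultimately have "card S \<le> card (outcomes n m) - 1"
    using card_forest_le[of "outcomes n m" S id] finite_outcomes shattered_swaps_forest[OF assms(1,2)] assms(1)
    unfolding swap_instances_def by fastforce
  then show ?thesis using card_outcomes by simp
qed

lemma parentless_cpt_const:
  assumes N: "is_cpnet n m N" "k_bounded n 0 N" and i: "i < n"
    and u: "u \<in> outcomes n m" "u' \<in> outcomes n m"
  shows "snd N i u = snd N i u'"
proof -
  have "fst N i \<subseteq> {..<n}" using N(1) i unfolding is_cpnet_def by blast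
  then have "fst N i = {}" using N(2) i finite_subset unfolding k_bounded_def by fastforce
  then show ?thesis using cpnet_cpt_cong[OF N(1) i u] by blast
qed

lemma shattered_separable_forest:
  assumes S: "S \<subseteq> swap_instances n m" and sh: "shatters (acyclic_k_class n m 0) S"
  shows "forest (\<lambda>s. (fst s ! i, snd s ! i)) {s \<in> S. swap_var n (fst s) (snd s) = i}"
    (is "forest ?ends ?S")
proof (rule ccontr)
  assume "\<not> forest ?ends ?S"
  then obtain L w inst where L: "0 < L" "w L = w 0" and inj: "inj_on inst {..<L}"
    and cyc: "\<And>t. t < L \<Longrightarrow> inst t \<in> ?S \<and> (?ends (inst t) = (w t, w (Suc t)) \<or> ?ends (inst t) = (w (Suc t), w t))"
    by (rule not_forest_obtains_cycle) auto
  define fw where "fw t \<longleftrightarrow> ?ends (inst t) = (w (Suc t), w t)" for t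
  have "\<exists>c\<in>acyclic_k_class n m 0. \<forall>t<L. inst t \<in> c \<longleftrightarrow> (fw t \<longleftrightarrow> (\<exists>s<L. fw s))"
    using cyc by (intro shatters_realizes_labelling[OF sh inj]) blast
  then obtain N where N: "is_cpnet n m N" "acyclic_cpnet n N" "k_bounded n 0 N"
    and lab: "\<forall>t<L. inst t \<in> concept n m N \<longleftrightarrow> (fw t \<longleftrightarrow> (\<exists>s<L. fw s))"
    unfolding acyclic_k_class_def by blast
  have sw: "inst t \<in> swap_instances n m" "swap_var n (fst (inst t)) (snd (inst t)) = i" if "t < L" for t
    using cyc[OF that] S by auto
  have i: "i < n" using swap_instancesD(3)[of "fst (inst 0)" "snd (inst 0)" n m] sw[OF L(1)] by simp
  show False
  proof (rule cycle_labelling_unrealizable[OF N(1,2) i, where g = w and I = "\<lambda>t. True"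
        and inst = inst and fw = fw and cc = "snd N i (snd (inst 0))", OF L(2) _ _ _ L(1)])
    fix t assume t: "t < L"
    show "inst t \<in> concept n m N \<longleftrightarrow> (fw t \<longleftrightarrow> (\<exists>s<L. True \<and> fw s))" using lab t by simp
    have "snd N i (snd (inst t)) = snd N i (snd (inst 0))"
      using parentless_cpt_const[OF N(1,3) i] swap_instancesD(2) sw(1) t L(1) by (metis prod.collapse)
    then show "inst t \<in> swap_instances n m \<and> swap_var n (fst (inst t)) (snd (inst t)) = i \<and>
        snd N i (snd (inst t)) = snd N i (snd (inst 0)) \<and>
        (fst (inst t) ! i, snd (inst t) ! i) = (if fw t then (w (Suc t), w t) else (w t, w (Suc t)))"
      using sw[OF t] cyc[OF t] unfolding fw_def by auto
  qed simp_all
qed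

lemma shattered_separable_card_le:
  assumes S: "S \<subseteq> swap_instances n m" and sh: "shatters (acyclic_k_class n m 0) S"
  shows "card S \<le> (m - 1) * n"
proof -
  let ?S = "\<lambda>i. {s \<in> S. swap_var n (fst s) (snd s) = i}"
  have fin: "finite S" using S finite_swap_instances finite_subset by blast
  have card_var: "card (?S i) \<le> m - 1" for i
  proof (cases "?S i = {}")
    case True
    then show ?thesis unfolding True by simp
  next
    case False
    have ends: "fst s ! i < m \<and> snd s ! i < m" if "s \<in> ?S i" for s
    proof -
      have sw: "(fst s, snd s) \<in> swap_instances n m" "swap_var n (fst s) (snd s) = i" using that S by auto
      show ?thesis using swap_instancesD(1-3)[OF sw(1)] sw(2) outcome_nth by auto
    qed
    then have "{..<m} \<noteq> {}" using False by fastforce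
    then show ?thesis
      using card_forest_le[of "{..<m}" "?S i" "\<lambda>s. (fst s ! i, snd s ! i)"] fin ends shattered_separable_forest[OF S sh] by simp
  qed
  have "swap_var n (fst s) (snd s) < n" if "s \<in> S" for s
    using that S swap_instancesD(3)[of "fst s" "snd s" n m] by auto
  then have "S \<subseteq> (\<Union>i<n. ?S i)" by blast
  then have "card S \<le> card (\<Union>i<n. ?S i)" by (rule card_mono[rotated]) (use fin in auto)
  also have "\<dots> \<le> (\<Sum>i<n. card (?S i))" by (rule card_UN_le) simp
  also have "\<dots> \<le> (\<Sum>i<n. m - 1)" using card_var by (intro sum_mono) auto
  finally show ?thesis by (simp add: mult.commute)
qed

section \<open>Lower bound\<close>

definition relevant_coords :: "nat \<Rightarrow> nat \<Rightarrow> nat set \<Rightarrow> (nat list \<Rightarrow> 'a) \<Rightarrow> nat set" where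
  "relevant_coords n m P f = {j \<in> P. \<exists>u\<in>outcomes n m. \<exists>u'\<in>outcomes n m.
     (\<forall>l\<in>P - {j}. u ! l = u' ! l) \<and> f u \<noteq> f u'}"

text \<open>Coordinates are made to agree one at a time; an irrelevant one never changes \<open>f\<close>.\<close>
lemma depends_on_relevant_coords:
  fixes f :: "nat list \<Rightarrow> 'a"
  assumes P: "finite P" "P \<subseteq> {..<n}"
    and dep: "\<And>u u'. u \<in> outcomes n m \<Longrightarrow> u' \<in> outcomes n m \<Longrightarrow> (\<forall>j\<in>P. u ! j = u' ! j) \<Longrightarrow> f u = f u'"
    and u: "u \<in> outcomes n m" "u' \<in> outcomes n m"
    and agree: "\<forall>j\<in>relevant_coords n m P f. u ! j = u' ! j"
  shows "f u = f u'"
  using u(1) agree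
proof (induction "card {j\<in>P. u ! j \<noteq> u' ! j}" arbitrary: u rule: less_induct)
  case less
  show ?case
  proof (cases "\<exists>j\<in>P. u ! j \<noteq> u' ! j")
    case False
    then show ?thesis using dep[OF less.prems(1) u(2)] by blast
  next
    case True
    then obtain j where j: "j \<in> P" "u ! j \<noteq> u' ! j" by blast
    then have irrelevant: "j \<notin> relevant_coords n m P f" using less.prems(2) by blast
    have jn: "j < n" using P(2) j(1) by auto
    define v where "v = u[j := u' ! j]"
    have v: "v \<in> outcomes n m"
      unfolding v_def using list_update_in_outcomes[OF less.prems(1) outcome_nth[OF u(2) jn]] .
    have "\<forall>l\<in>P - {j}. u ! l = v ! l" unfolding v_def by simp
    then have "f u = f v" using irrelevant j(1) less.prems(1) v unfolding relevant_coords_def by blast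
    have "length u = n" using less.prems(1) unfolding outcomes_def by simp
    then have "{l\<in>P. v ! l \<noteq> u' ! l} = {l\<in>P. u ! l \<noteq> u' ! l} - {j}"
      unfolding v_def using jn by (auto simp: nth_list_update)
    moreover have "card ({l\<in>P. u ! l \<noteq> u' ! l} - {j}) < card {l\<in>P. u ! l \<noteq> u' ! l}"
      using j P(1) by (intro card_Diff1_less) auto
    ultimately have "card {l\<in>P. v ! l \<noteq> u' ! l} < card {l\<in>P. u ! l \<noteq> u' ! l}" by simp
    moreover have "\<forall>l\<in>relevant_coords n m P f. v ! l = u' ! l"
      using less.prems(2) irrelevant unfolding v_def by (metis nth_list_update_neq)
    ultimately have "f v = f u'" by (rule less.hyps[OF _ v])
    then show ?thesis using \<open>f u = f v\<close> by simp
  qed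
qed

lemma cpnet_of_cpts:
  fixes c :: "nat \<Rightarrow> nat list \<Rightarrow> (nat \<Rightarrow> nat \<Rightarrow> bool) option"
  assumes P: "\<And>i. i < n \<Longrightarrow> P i \<subseteq> {..<i}"
    and total: "\<And>i u r. i < n \<Longrightarrow> u \<in> outcomes n m \<Longrightarrow> c i u = Some r \<Longrightarrow> strict_total_on m r"
    and dep: "\<And>i u u'. i < n \<Longrightarrow> u \<in> outcomes n m \<Longrightarrow> u' \<in> outcomes n m \<Longrightarrow>
        (\<forall>j\<in>P i. u ! j = u' ! j) \<Longrightarrow> c i u = c i u'"
  defines "N \<equiv> (\<lambda>i. relevant_coords n m (P i) (c i), c)"
  shows "is_cpnet n m N" "acyclic_cpnet n N" "\<And>i. i < n \<Longrightarrow> fst N i \<subseteq> P i"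
proof -
  have sub: "relevant_coords n m (P i) (c i) \<subseteq> P i" for i unfolding relevant_coords_def by auto
  show "is_cpnet n m N"
    unfolding is_cpnet_def N_def fst_conv snd_conv
  proof (intro conjI allI impI ballI)
    fix i assume "i < n"
    then show "relevant_coords n m (P i) (c i) \<subseteq> {..<n} - {i}" using sub P by fastforce
  next
    fix i u r assume "i < n" "u \<in> outcomes n m" "c i u = Some r"
    then show "strict_total_on m r" by (rule total)
  next
    fix i u u' assume i: "i < n" and u: "u \<in> outcomes n m" "u' \<in> outcomes n m"
      and "\<forall>j\<in>relevant_coords n m (P i) (c i). u ! j = u' ! j"
    moreover have "finite (P i)" "P i \<subseteq> {..<n}" using P[OF i] i finite_subset by auto
    ultimately show "c i u = c i u'" using depends_on_relevant_coords dep[OF i] by blast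
  next
    fix i j assume "i < n" "j \<in> relevant_coords n m (P i) (c i)"
    then show "\<exists>u\<in>outcomes n m. \<exists>u'\<in>outcomes n m.
        (\<forall>l\<in>relevant_coords n m (P i) (c i) - {j}. u ! l = u' ! l) \<and> c i u \<noteq> c i u'"
      using sub unfolding relevant_coords_def by blast
  qed
  have "parent_graph n N \<subseteq> less_than" unfolding parent_graph_def N_def using sub P by fastforce
  then show "acyclic_cpnet n N"
    unfolding acyclic_cpnet_def using acyclic_subset wf_acyclic wf_less_than by blast
  show "fst N i \<subseteq> P i" if "i < n" for i using sub unfolding N_def by simp
qed

definition outcomes_zero_from :: "nat \<Rightarrow> nat \<Rightarrow> nat \<Rightarrow> nat list set" where
  "outcomes_zero_from n m p = {u \<in> outcomes n m. \<forall>j<n. p \<le> j \<longrightarrow> u ! j = 0}"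

definition swaps_from_zero :: "nat \<Rightarrow> nat \<Rightarrow> nat \<Rightarrow> nat \<Rightarrow> (nat list \<times> nat list) set" where
  "swaps_from_zero n m k i = (\<lambda>(a, u). (u[i := a], u)) ` ({1..<m} \<times> outcomes_zero_from n m (min i k))"

definition witness_swaps :: "nat \<Rightarrow> nat \<Rightarrow> nat \<Rightarrow> (nat list \<times> nat list) set" where
  "witness_swaps n m k = (\<Union>i<n. swaps_from_zero n m k i)"

lemma card_outcomes_zero_from:
  assumes "p \<le> n" "0 < m"
  shows "card (outcomes_zero_from n m p) = m ^ p"
proof -
  let ?L = "{xs. set xs \<subseteq> {..<m} \<and> length xs = p}"
  let ?pad = "\<lambda>xs. xs @ replicate (n - p) (0::nat)"
  have "outcomes_zero_from n m p = ?pad ` ?L"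
  proof (intro equalityI subsetI)
    fix u assume "u \<in> ?pad ` ?L"
    then show "u \<in> outcomes_zero_from n m p"
      using assms unfolding outcomes_zero_from_def outcomes_def by (auto simp: nth_append subset_iff)
  next
    fix u assume u: "u \<in> outcomes_zero_from n m p"
    then have "length u = n" "set u \<subseteq> {..<m}" "\<forall>j<n. p \<le> j \<longrightarrow> u ! j = 0"
      unfolding outcomes_zero_from_def outcomes_def by auto
    then have "u = ?pad (take p u)" "take p u \<in> ?L"
      using assms set_take_subset[of p u] by (auto intro!: nth_equalityI simp: nth_append)
    then show "u \<in> ?pad ` ?L" by blast
  qed
  moreover have "inj_on ?pad ?L" by (auto intro!: inj_onI)
  ultimately show ?thesis by (simp add: card_image card_lists_length_eq)
qed

lemma swaps_from_zero_iff:
  "s \<in> swaps_from_zero n m k i \<longleftrightarrow>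
    (\<exists>a u. s = (u[i := a], u) \<and> 0 < a \<and> a < m \<and> u \<in> outcomes_zero_from n m (min i k))"
  unfolding swaps_from_zero_def by (auto simp: Suc_le_eq)

lemma witness_swapsE:
  assumes "s \<in> witness_swaps n m k"
  obtains i a u where "i < n" "0 < a" "a < m" "u \<in> outcomes_zero_from n m (min i k)" "s = (u[i := a], u)"
proof -
  obtain i where "i < n" "s \<in> swaps_from_zero n m k i" using assms unfolding witness_swaps_def by blast
  then show ?thesis using that unfolding swaps_from_zero_iff by blast
qed

lemma swap_from_zero:
  assumes i: "i < n" and a: "0 < a" "a < m" and u: "u \<in> outcomes_zero_from n m (min i k)"
  shows "(u[i := a], u) \<in> swap_instances n m" "swap_var n (u[i := a]) u = i" "u ! i = 0"
proof -
  have uo: "u \<in> outcomes n m" and "length u = n" using u unfolding outcomes_zero_from_def outcomes_def by auto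
  show ui: "u ! i = 0" using u i unfolding outcomes_zero_from_def by auto
  have "{j. j < n \<and> u[i := a] ! j \<noteq> u ! j} = {i}" using i \<open>length u = n\<close> ui a by (auto simp: nth_list_update)
  then show sw: "(u[i := a], u) \<in> swap_instances n m"
    unfolding swap_instances_def using uo list_update_in_outcomes[OF uo a(2)] by simp
  show "swap_var n (u[i := a]) u = i"
    using swap_var_eqI[OF sw, of i] i \<open>length u = n\<close> ui a by simp
qed

lemma concept_swap_from_zero_iff:
  assumes N: "is_cpnet n m N" "acyclic_cpnet n N"
    and i: "i < n" and a: "0 < a" "a < m" and u: "u \<in> outcomes_zero_from n m (min i k)"
  shows "(u[i := a], u) \<in> concept n m N \<longleftrightarrow> (\<exists>r. snd N i u = Some r \<and> r a 0)"
proof -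
  have "length u = n" using u unfolding outcomes_zero_from_def outcomes_def by simp
  then show ?thesis using concept_swap_iff[OF N swap_from_zero(1)[OF i a u]] swap_from_zero(2,3)[OF i a u] i
    by simp
qed

lemma witness_swaps_subset: "witness_swaps n m k \<subseteq> swap_instances n m"
  using swap_from_zero(1) by (auto elim!: witness_swapsE)

lemma card_witness_swaps:
  assumes "0 < m"
  shows "card (witness_swaps n m k) = (\<Sum>i<n. (m - 1) * m ^ min i k)"
proof -
  have card_i: "card (swaps_from_zero n m k i) = (m - 1) * m ^ min i k" if i: "i < n" for i
  proof -
    have "inj_on (\<lambda>(a, u). (u[i := a], u)) ({1..<m} \<times> outcomes_zero_from n m (min i k))"
    proof (rule inj_onI, clarsimp)
      fix a u a' assume "u \<in> outcomes_zero_from n m (min i k)" and eq: "u[i := a] = u[i := a']"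
      then have "length u = n" unfolding outcomes_zero_from_def outcomes_def by simp
      then show "a = a'" using arg_cong[OF eq, of "\<lambda>v. v ! i"] i by simp
    qed
    then show ?thesis
      unfolding swaps_from_zero_def using i card_outcomes_zero_from[of "min i k" n m] assms
      by (simp add: card_image card_cartesian_product)
  qed
  have var: "swap_var n (fst s) (snd s) = i" if "s \<in> swaps_from_zero n m k i" "i < n" for s i
    using that swap_from_zero(2) unfolding swaps_from_zero_iff by auto
  then have "swaps_from_zero n m k i \<inter> swaps_from_zero n m k j = {}" if "i \<noteq> j" "i < n" "j < n" for i j
    using that var[of _ i] var[of _ j] by blast
  moreover have "finite (swaps_from_zero n m k i)" if "i < n" for i
    using witness_swaps_subset finite_swap_instances that
    unfolding witness_swaps_def by (meson UN_subset_iff finite_subset lessThan_iff)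
  ultimately have "card (witness_swaps n m k) = (\<Sum>i<n. card (swaps_from_zero n m k i))"
    unfolding witness_swaps_def by (intro card_UN_disjoint) auto
  then show ?thesis using card_i by simp
qed

lemma sum_geometric_nat: "(\<Sum>i<k. (m - 1) * m ^ i) = m ^ k - (1::nat)" if "0 < m"
proof (induction k)
  case (Suc k)
  have "m ^ k - 1 + (m - 1) * m ^ k = m * m ^ k - 1" using that by (simp add: diff_mult_distrib)
  then show ?case using Suc by simp
qed simp

lemma sum_min_geometric:
  assumes "k < n" "0 < m"
  shows "(\<Sum>i<n. (m - 1) * m ^ min i k) = (m - 1) * (n - k) * m ^ k + m ^ k - 1"
proof -
  have "(\<Sum>i<n. (m - 1) * m ^ min i k)
      = (\<Sum>i\<in>{0..<k}. (m - 1) * m ^ min i k) + (\<Sum>i\<in>{k..<n}. (m - 1) * m ^ min i k)"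
    unfolding lessThan_atLeast0 using assms(1) by (intro sum.atLeastLessThan_concat[symmetric]) auto
  also have "(\<Sum>i\<in>{0..<k}. (m - 1) * m ^ min i k) = m ^ k - 1"
    using sum_geometric_nat[OF assms(2)] by (simp add: lessThan_atLeast0)
  also have "(\<Sum>i\<in>{k..<n}. (m - 1) * m ^ min i k) = (n - k) * ((m - 1) * m ^ k)" by simp
  finally show ?thesis using assms(2) by (simp add: algebra_simps)
qed

lemma strict_total_on_key:
  fixes key :: "nat \<Rightarrow> 'a::linorder"
  assumes "inj_on key {..<m}"
  shows "strict_total_on m (\<lambda>x y. x < m \<and> y < m \<and> key y < key x)"
  unfolding strict_total_on_def
proof (intro conjI allI impI)
  fix a b assume "a < m" "b < m" "a \<noteq> b"
  then have "key a \<noteq> key b" using assms by (auto dest: inj_onD)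
  then show "a < m \<and> b < m \<and> key b < key a \<or> b < m \<and> a < m \<and> key a < key b"
    using \<open>a < m\<close> \<open>b < m\<close> by auto
qed (auto dest: less_trans)

lemma shatters_witness_swaps:
  assumes m: "0 < m"
  shows "shatters (acyclic_k_class n m k) (witness_swaps n m k)"
  unfolding shatters_def
proof (intro allI impI)
  fix T assume T: "T \<subseteq> witness_swaps n m k"
  define ctx where "ctx i u = map (\<lambda>j. if j < min i k then u ! j else (0::nat)) [0..<n]" for i u
  text \<open>In context \<open>u\<close>, \<open>v\<^sub>i\<close> ranks \<open>a \<noteq> 0\<close> above \<open>0\<close> iff the swap from \<open>0\<close> to \<open>a\<close>
    in \<open>ctx i u\<close> is in \<open>T\<close>.\<close>
  define key where "key i u a =
    (if a = 0 then 0 else if ((ctx i u)[i := a], ctx i u) \<in> T then int a else - int a)" for i u a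
  define c where "c i u = Some (\<lambda>x y. x < m \<and> y < m \<and> key i u y < key i u x)" for i u
  define N where "N = (\<lambda>i. relevant_coords n m {..<min i k} (c i), c)"
  have "i < n \<Longrightarrow> {..<min i k} \<subseteq> {..<i}" for i by auto
  moreover have "strict_total_on m r" if "c i u = Some r" for i u r
  proof -
    have "inj_on (key i u) {..<m}" unfolding key_def by (auto intro!: inj_onI split: if_splits)
    then show ?thesis using strict_total_on_key that unfolding c_def by fastforce
  qed
  moreover have "c i u = c i u'" if "\<forall>j\<in>{..<min i k}. u ! j = u' ! j" for i u u'
  proof -
    have "ctx i u = ctx i u'" using that unfolding ctx_def by auto
    then show ?thesis unfolding c_def key_def by simp
  qed
  ultimately have N: "is_cpnet n m N" "acyclic_cpnet n N" "\<And>i. i < n \<Longrightarrow> fst N i \<subseteq> {..<min i k}"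
    unfolding N_def by (rule cpnet_of_cpts[where P = "\<lambda>i. {..<min i k}"], blast+)+
  have "k_bounded n k N"
    unfolding k_bounded_def using N(3) by (metis card_lessThan card_mono finite_lessThan le_trans min.cobounded2)
  moreover have "s \<in> concept n m N \<longleftrightarrow> s \<in> T" if s_w: "s \<in> witness_swaps n m k" for s
  proof -
    obtain i a u where i: "i < n" and a: "0 < a" "a < m" and u: "u \<in> outcomes_zero_from n m (min i k)"
      and s: "s = (u[i := a], u)" using s_w by (rule witness_swapsE)
    have "ctx i u = u"
      using u i unfolding ctx_def outcomes_zero_from_def outcomes_def by (auto intro!: nth_equalityI)
    have "s \<in> concept n m N \<longleftrightarrow> (\<exists>r. c i u = Some r \<and> r a 0)"
      using concept_swap_from_zero_iff[OF N(1,2) i a u] s unfolding N_def by simp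
    also have "\<dots> \<longleftrightarrow> key i u 0 < key i u a" using a m unfolding c_def by simp
    also have "\<dots> \<longleftrightarrow> s \<in> T" using \<open>ctx i u = u\<close> s a unfolding key_def by auto
    finally show ?thesis .
  qed
  then have "concept n m N \<inter> witness_swaps n m k = T" using T by blast
  ultimately show "\<exists>c\<in>acyclic_k_class n m k. c \<inter> witness_swaps n m k = T"
    unfolding acyclic_k_class_def using N(1,2) by blast
qed

section \<open>VC dimension\<close>

lemma finite_shattered_cards:
  "finite X \<Longrightarrow> finite {card S | S. S \<subseteq> X \<and> finite S \<and> shatters C S}"
  by (rule finite_subset[of _ "card ` Pow X"]) auto

lemma card_le_VCD:
  assumes "finite X" "S \<subseteq> X" "shatters C S"
  shows "card S \<le> VCD C X"
  unfolding VCD_def using finite_shattered_cards[OF assms(1)] assms finite_subset by (intro Max_ge) blast+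

lemma VCD_eqI:
  assumes "finite X" "S \<subseteq> X" "shatters C S"
    and "\<And>S'. S' \<subseteq> X \<Longrightarrow> shatters C S' \<Longrightarrow> card S' \<le> card S"
  shows "VCD C X = card S"
  unfolding VCD_def using finite_shattered_cards[OF assms(1)] assms finite_subset by (intro Max_eqI) blast+

lemma mult_M_k:
  assumes "0 < m"
  shows "(m - 1) * M_k n m k = (m - 1) * (n - k) * m ^ k + m ^ k - 1"
proof -
  have "(m - 1) dvd (m ^ k - 1)"
    using sum_geometric_nat[OF assms, of k] by (metis dvd_triv_left sum_distrib_left)
  then have "(m - 1) * ((m ^ k - 1) div (m - 1)) = m ^ k - 1" by simp
  moreover have "1 \<le> m ^ k" using assms by simp
  ultimately show ?thesis unfolding M_k_def by (simp add: distrib_left mult.assoc)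
qed

theorem corollary1:
  fixes n m k :: nat
  assumes "n \<ge> 1" and "m \<ge> 2" and "k \<le> n - 1"
  shows "VCD (acyclic_k_class n m (n - 1)) (swap_instances n m) = m ^ n - 1 \<and>
         VCD (acyclic_k_class n m 0) (swap_instances n m) = (m - 1) * n \<and>
         VCD (acyclic_k_class n m k) (swap_instances n m) \<ge> (m - 1) * M_k n m k \<and>
         (m - 1) * M_k n m k = (m - 1) * (n - k) * m ^ k + m ^ k - 1"
proof -
  have m: "0 < m" using assms(2) by simp
  have card_witness: "card (witness_swaps n m k') = (m - 1) * (n - k') * m ^ k' + m ^ k' - 1"
    if "k' < n" for k'
    using card_witness_swaps[OF m] sum_min_geometric[OF that m] by simp
  have "card (witness_swaps n m (n - 1)) = m ^ n - 1"
    using card_witness[of "n - 1"] assms(1) m by (cases n) (auto simp: algebra_simps)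
  then have "VCD (acyclic_k_class n m (n - 1)) (swap_instances n m) = m ^ n - 1"
    using VCD_eqI[OF finite_swap_instances witness_swaps_subset shatters_witness_swaps[OF m]]
      shattered_card_le[OF _ _ m] by metis
  moreover have "VCD (acyclic_k_class n m 0) (swap_instances n m) = (m - 1) * n"
    using VCD_eqI[OF finite_swap_instances witness_swaps_subset shatters_witness_swaps[OF m]]
      card_witness[of 0] shattered_separable_card_le assms(1) by simp
  moreover have "card (witness_swaps n m k) \<le> VCD (acyclic_k_class n m k) (swap_instances n m)"
    by (rule card_le_VCD[OF finite_swap_instances witness_swaps_subset shatters_witness_swaps[OF m]])
  ultimately show ?thesis using card_witness[of k] mult_M_k[OF m, of n k] assms by auto
qed

end
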